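(* Let $\mathcal{M}_\|$ be a two-dimensional timelike plane through the origin in $\mathbb{R}^{1+s}$ and $\mathcal{M}_\perp$ its Minkowski-orthogonal complement. Let $a_\pm\in\mathbb{R}^{1+s}$ satisfy $(a_+-a_-)_\|\in V_+$, where $y_\|$ denotes the component of $y$ in $\mathcal{M}_\|$ under the decomposition $\mathbb{R}^{1+s}=\mathcal{M}_\|\oplus\mathcal{M}_\perp$. Then the set $G:=\big((a_++\overline{V}_+)\cup(a_-+\overline{V}_-)\big)+\mathcal{M}_\perp$ has property $\mathbf{lts}(\mathcal{M}_\|)$.
   Context: $\mathbb{R}^{1+s}$ is Minkowski space with metric $xy=x_0y_0-\vec x\cdot\vec y$; $V_\pm$ open forward/backward light cones, $\overline{V}_\pm$ their closures. For a two-dimensional timelike plane $\mathcal{M}_\|$ through the origin, a set $G\subset\mathbb{R}^{1+s}$ has property $\mathbf{lts}(\mathcal{M}_\|)$ if every $p\in G$ has an open neighbourhood $\mathcal{N}_p$ invariant under translations by $\mathcal{M}_\|$ such that $G\cap\mathcal{N}_p\subset(a_+(p)+V_+)\cup(a_-(p)+V_-)$ for some $a_\pm(p)\in\mathbb{R}^{1+s}$ with $a_+(p)-a_-(p)\in V_+$. *)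

theory Defs
  imports "HOL-Analysis.Analysis"
begin

text \<open>Minkowski space R^{1+s} is modelled as real \<times> (real^'s), s = CARD('s);
  the first component is the time coordinate x_0, the second is the spatial vector.\<close>

type_synonym 's mink = "real \<times> (real ^ 's)"

definition mprod :: "'s::finite mink \<Rightarrow> 's mink \<Rightarrow> real" where
  "mprod x y = fst x * fst y - snd x \<bullet> snd y"

definition Vplus :: "'s::finite mink set" where
  "Vplus = {x. fst x > norm (snd x)}"

definition Vminus :: "'s::finite mink set" where
  "Vminus = {x. - fst x > norm (snd x)}"

definition transl :: "'s::finite mink \<Rightarrow> 's mink set \<Rightarrow> 's mink set" where
  "transl a A = (\<lambda>x. a + x) ` A"

definition setsum_mink :: "'s::finite mink set \<Rightarrow> 's mink set \<Rightarrow> 's mink set" where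
  "setsum_mink A B = {x + y | x y. x \<in> A \<and> y \<in> B}"

definition timelike_plane :: "'s::finite mink set \<Rightarrow> bool" where
  "timelike_plane M \<longleftrightarrow> subspace M \<and> dim M = 2 \<and> (\<exists>x\<in>M. mprod x x > 0)"

definition mperp :: "'s::finite mink set \<Rightarrow> 's mink set" where
  "mperp M = {y. \<forall>x\<in>M. mprod x y = 0}"

definition mpar :: "'s::finite mink set \<Rightarrow> 's mink \<Rightarrow> 's mink" where
  "mpar M y = (THE m. m \<in> M \<and> y - m \<in> mperp M)"

definition lts :: "'s::finite mink set \<Rightarrow> 's mink set \<Rightarrow> bool" where
  "lts M G \<longleftrightarrow> (\<forall>p\<in>G. \<exists>N. open N \<and> p \<in> N \<and> (\<forall>m\<in>M. transl m N = N) \<and>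
      (\<exists>ap am. ap - am \<in> Vplus \<and> G \<inter> N \<subseteq> transl ap Vplus \<union> transl am Vminus))"

end

theory Submission
  imports Defs
begin

text \<open>Write \<open>y = y\<^sub>\<parallel> + y\<^sub>\<perp>\<close> for the decomposition along \<open>M \<oplus> M\<^sub>\<perp>\<close> and \<open>y\<^sup>2\<close> for the
  Minkowski square. As \<open>M\<close> contains a timelike vector, \<open>y\<^sup>2 < 0\<close> on \<open>M\<^sub>\<perp> - {0}\<close>, so
  \<open>N\<^sub>p = {x. - ((x - p)\<^sub>\<perp>)\<^sup>2 < \<delta>}\<close> is an open \<open>M\<close>-invariant tube around \<open>p + M\<close>.
  Let \<open>d = (a\<^sub>+ - a\<^sub>-)\<^sub>\<parallel> \<in> V\<^sub>+\<close>, \<open>\<delta> = d\<^sup>2/16\<close>, and take the new apices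
  \<open>(a\<^sub>+)\<^sub>\<parallel> + p\<^sub>\<perp> - d/4\<close> and \<open>(a\<^sub>-)\<^sub>\<parallel> + p\<^sub>\<perp> + d/4\<close>, which differ by \<open>d/2\<close>.
  A point of the future half of \<open>G \<inter> N\<^sub>p\<close> exceeds the first apex by \<open>v\<^sub>\<parallel> + d/4 + w\<close> with
  \<open>v\<close> causal, \<open>w \<in> M\<^sub>\<perp>\<close> and \<open>-w\<^sup>2 < \<delta>\<close>. Projecting onto \<open>M\<close> does not decrease the
  Minkowski square, so \<open>v\<^sub>\<parallel>\<^sup>2 \<ge> 0\<close>; also \<open>v\<^sub>\<parallel>\<cdot>d = v\<cdot>d \<ge> 0\<close>. Hence
  \<open>(v\<^sub>\<parallel> + d/4 + w)\<^sup>2 \<ge> d\<^sup>2/16 + w\<^sup>2 > 0\<close> and its product with \<open>d\<close> is positive, so it lies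
  in \<open>V\<^sub>+\<close>. The past half is symmetric.\<close>

lemma mprod_commute: "mprod x y = mprod y x"
  by (simp add: mprod_def inner_commute mult.commute)

lemma mprod_add_left: "mprod (x + y) z = mprod x z + mprod y z"
  by (simp add: mprod_def algebra_simps)

lemma mprod_add_right: "mprod z (x + y) = mprod z x + mprod z y"
  by (simp add: mprod_def algebra_simps)

lemma mprod_diff_left: "mprod (x - y) z = mprod x z - mprod y z"
  by (simp add: mprod_def algebra_simps)

lemma mprod_diff_right: "mprod z (x - y) = mprod z x - mprod z y"
  by (simp add: mprod_def algebra_simps)

lemma mprod_scaleR_left: "mprod (c *\<^sub>R x) y = c * mprod x y"
  by (simp add: mprod_def algebra_simps)

lemma mprod_scaleR_right: "mprod y (c *\<^sub>R x) = c * mprod y x"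
  by (simp add: mprod_def algebra_simps)

lemma mprod_zero_left [simp]: "mprod 0 y = 0"
  by (simp add: mprod_def)

lemma mprod_zero_right [simp]: "mprod y 0 = 0"
  by (simp add: mprod_def)

lemmas mprod_simps = mprod_add_left mprod_add_right mprod_diff_left mprod_diff_right
  mprod_scaleR_left mprod_scaleR_right

lemma mprod_self: "mprod x x = (fst x)\<^sup>2 - (norm (snd x))\<^sup>2"
  by (simp add: mprod_def dot_square_norm power2_eq_square)

lemma mprod_self_pos_if_Vplus: "x \<in> Vplus \<Longrightarrow> mprod x x > 0"
  by (simp add: Vplus_def mprod_self power_strict_mono)

lemma mprod_self_nonneg_if_causal: "norm (snd v) \<le> fst v \<Longrightarrow> mprod v v \<ge> 0"
  by (simp add: mprod_self power_mono)

lemma mprod_Vplus_causal_nonneg: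
  assumes e: "e \<in> Vplus" and v: "norm (snd v) \<le> fst v"
  shows "mprod e v \<ge> 0"
proof -
  have e': "norm (snd e) < fst e"
    using e by (simp add: Vplus_def)
  have "snd e \<bullet> snd v \<le> norm (snd e) * norm (snd v)"
    by (rule norm_cauchy_schwarz)
  also have "\<dots> \<le> fst e * fst v"
    using e' v le_less_trans[OF norm_ge_zero e'] by (intro mult_mono) auto
  finally show ?thesis
    by (simp add: mprod_def)
qed

lemma Vplus_scaleR: "x \<in> Vplus \<Longrightarrow> c > 0 \<Longrightarrow> c *\<^sub>R x \<in> Vplus"
  by (simp add: Vplus_def)

lemma in_transl_Vplus_iff: "x \<in> transl a Vplus \<longleftrightarrow> x - a \<in> Vplus"
  by (force simp: transl_def)

lemma in_transl_Vminus_iff: "x \<in> transl a Vminus \<longleftrightarrow> a - x \<in> Vplus"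
proof -
  have "x \<in> transl a Vminus \<longleftrightarrow> x - a \<in> Vminus"
    by (force simp: transl_def)
  then show ?thesis
    by (simp add: Vplus_def Vminus_def norm_minus_commute)
qed

lemma setsum_mink_Un_left: "setsum_mink (A \<union> B) C = setsum_mink A C \<union> setsum_mink B C"
  by (auto simp: setsum_mink_def)

lemma closure_Vplus_subset: "closure Vplus \<subseteq> {x. norm (snd x) \<le> fst x}"
  by (rule closure_minimal) (auto simp: Vplus_def intro!: closed_Collect_le continuous_intros)

lemma closure_Vminus_subset: "closure Vminus \<subseteq> {x. norm (snd x) \<le> - fst x}"
  by (rule closure_minimal) (auto simp: Vminus_def intro!: closed_Collect_le continuous_intros)

lemma spacelike_if_orth_timelike:
  fixes t w :: "'s::finite mink"
  assumes t: "mprod t t > 0" and tw: "mprod t w = 0"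
  shows "mprod w w \<le> 0" and "mprod w w = 0 \<Longrightarrow> w = 0"
proof -
  define a b c u where "a = fst t" "b = snd t" "c = fst w" "u = snd w"
  have ab: "(norm b)\<^sup>2 < a\<^sup>2"
    using t by (simp add: mprod_self a_b_c_u_def)
  have "\<bar>a * c\<bar> \<le> norm b * norm u"
    using tw Cauchy_Schwarz_ineq2[of b u] by (simp add: mprod_def a_b_c_u_def)
  then have "a\<^sup>2 * c\<^sup>2 \<le> (norm b)\<^sup>2 * (norm u)\<^sup>2"
    by (metis abs_ge_zero power2_abs power_mono power_mult_distrib)
  also have "\<dots> \<le> a\<^sup>2 * (norm u)\<^sup>2"
    using ab by (simp add: mult_right_mono)
  finally have cu: "a\<^sup>2 * c\<^sup>2 \<le> a\<^sup>2 * (norm u)\<^sup>2" .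
  have a: "a\<^sup>2 > 0"
    using ab zero_le_power2[of "norm b"] by linarith
  have ww: "mprod w w = c\<^sup>2 - (norm u)\<^sup>2"
    by (simp add: mprod_self a_b_c_u_def)
  show "mprod w w \<le> 0"
    using cu a ww by simp
  assume "mprod w w = 0"
  then have "c\<^sup>2 = (norm u)\<^sup>2"
    using ww by simp
  then have "a\<^sup>2 * (norm u)\<^sup>2 \<le> (norm b)\<^sup>2 * (norm u)\<^sup>2"
    using \<open>a\<^sup>2 * c\<^sup>2 \<le> (norm b)\<^sup>2 * (norm u)\<^sup>2\<close> by simp
  then have "u = 0"
    using ab by (simp add: mult_le_cancel_right)
  moreover have "c = 0"
    using \<open>c\<^sup>2 = (norm u)\<^sup>2\<close> \<open>u = 0\<close> by simp
  ultimately show "w = 0"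
    by (simp add: a_b_c_u_def prod_eq_iff)
qed

lemma Vplus_if_timelike_mprod_pos:
  assumes e: "e \<in> Vplus" and z: "mprod z z > 0" and ez: "mprod e z > 0"
  shows "z \<in> Vplus"
proof (rule ccontr)
  assume "z \<notin> Vplus"
  have "(norm (snd z))\<^sup>2 < \<bar>fst z\<bar>\<^sup>2"
    using z by (simp add: mprod_self)
  then have "norm (snd z) < \<bar>fst z\<bar>"
    by (rule power_less_imp_less_base) simp
  then have "norm (snd z) < - fst z"
    using \<open>z \<notin> Vplus\<close> by (auto simp: Vplus_def)
  then have "norm (snd (- z)) \<le> fst (- z)"
    by simp
  then have "mprod e (- z) \<ge> 0"
    by (rule mprod_Vplus_causal_nonneg[OF e])
  then show False
    using ez by (simp add: mprod_def)
qed

lemma subspace_mperp: "subspace (mperp M)"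
  by (auto simp: subspace_def mperp_def mprod_simps)

lemma mperp_orthogonal:
  assumes "m \<in> M" "w \<in> mperp M"
  shows "mprod m w = 0" and "mprod w m = 0"
  using assms mprod_commute[of w m] by (simp_all add: mperp_def)

lemma mperp_inter_eq_0:
  assumes "t \<in> M" "mprod t t > 0" "k \<in> M" "k \<in> mperp M"
  shows "k = 0"
  using assms spacelike_if_orth_timelike(2)[of t k] by (simp add: mperp_def)

lemma timelike_plane_orthogonal_basis:
  assumes "timelike_plane M"
  obtains t s where "t \<in> M" "s \<in> M" "mprod t t > 0" "mprod s s < 0" "mprod t s = 0"
    "M \<subseteq> span {t, s}"
proof -
  have subM: "subspace M" and dM: "dim M = 2"
    using assms by (auto simp: timelike_plane_def)
  obtain t where t: "t \<in> M" "mprod t t > 0"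
    using assms by (auto simp: timelike_plane_def)
  then have "t \<noteq> 0"
    by auto
  have "\<not> M \<subseteq> span {t}"
    using dim_subset[of M "span {t}"] dM \<open>t \<noteq> 0\<close> by auto
  then obtain m where m: "m \<in> M" "m \<notin> span {t}"
    by auto
  define s where "s = m - (mprod m t / mprod t t) *\<^sub>R t"
  have sM: "s \<in> M"
    unfolding s_def using subM m t by (simp add: subspace_diff subspace_scale)
  have ts: "mprod t s = 0"
    using t unfolding s_def by (simp add: mprod_simps mprod_commute[of t m])
  have "s \<notin> span {t}"
    using m unfolding s_def by (metis diff_add_cancel span_add span_base span_scale singletonI)
  then have "s \<noteq> 0"
    by (auto simp: span_zero)
  then have ss: "mprod s s < 0"
    using spacelike_if_orth_timelike[OF t(2) ts] by fastforce
  have "independent {s, t}"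
    using \<open>s \<notin> span {t}\<close> \<open>t \<noteq> 0\<close> by (intro independent_insertI) (auto simp: independent_empty)
  moreover have "s \<noteq> t"
    using ts t by auto
  ultimately have "M \<subseteq> span {s, t}"
    using sM t dM by (intro card_ge_dim_independent) auto
  then show ?thesis
    using that t sM ss ts by (simp add: insert_commute)
qed

lemma timelike_plane_decomposition:
  assumes "timelike_plane M"
  obtains m where "m \<in> M" "y - m \<in> mperp M"
proof -
  obtain t s where tM: "t \<in> M" and sM: "s \<in> M" and tt: "mprod t t > 0" and ss: "mprod s s < 0"
    and ts: "mprod t s = 0" and Msp: "M \<subseteq> span {t, s}"
    using timelike_plane_orthogonal_basis[OF assms] by blast
  define m where "m = (mprod y t / mprod t t) *\<^sub>R t + (mprod y s / mprod s s) *\<^sub>R s"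
  have "m \<in> M"
    using assms tM sM by (simp add: m_def timelike_plane_def subspace_add subspace_scale)
  moreover have "span {t, s} \<subseteq> {x. mprod x (y - m) = 0}"
  proof (rule span_minimal)
    show "{t, s} \<subseteq> {x. mprod x (y - m) = 0}"
      using tt ss ts
      by (simp add: m_def mprod_simps mprod_commute[of _ y] mprod_commute[of s t])
    show "subspace {x. mprod x (y - m) = 0}"
      by (auto simp: subspace_def mprod_simps)
  qed
  then have "y - m \<in> mperp M"
    using Msp by (auto simp: mperp_def)
  ultimately show ?thesis
    using that by blast
qed

definition mperp_part :: "'s::finite mink set \<Rightarrow> 's mink \<Rightarrow> 's mink" where
  "mperp_part M y = y - mpar M y"

definition mperp_tube :: "'s::finite mink set \<Rightarrow> 's mink \<Rightarrow> real \<Rightarrow> 's mink set" where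
  "mperp_tube M p r = {x. - mprod (mperp_part M (x - p)) (mperp_part M (x - p)) < r}"

context
  fixes M :: "'s::finite mink set"
  assumes M: "timelike_plane M"
begin

lemma subspace_plane: "subspace M"
  using M by (simp add: timelike_plane_def)

lemma mpar_eqI:
  assumes "m \<in> M" "y - m \<in> mperp M"
  shows "mpar M y = m"
  unfolding mpar_def
proof (rule the_equality)
  show "m \<in> M \<and> y - m \<in> mperp M"
    using assms by simp
  fix m' assume m': "m' \<in> M \<and> y - m' \<in> mperp M"
  obtain t where t: "t \<in> M" "mprod t t > 0"
    using M by (auto simp: timelike_plane_def)
  have "m' - m \<in> M"
    using m' assms subspace_plane by (simp add: subspace_diff)
  moreover have "(y - m) - (y - m') \<in> mperp M"
    by (rule subspace_diff[OF subspace_mperp]) (use m' assms in simp_all)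
  ultimately have "m' - m = 0"
    using mperp_inter_eq_0[OF t, of "m' - m"] by simp
  then show "m' = m"
    by simp
qed

lemma mpar_in_plane: "mpar M y \<in> M"
  and diff_mpar_in_mperp: "y - mpar M y \<in> mperp M"
proof -
  obtain m where "m \<in> M" "y - m \<in> mperp M"
    using timelike_plane_decomposition[OF M] .
  moreover from this have "mpar M y = m"
    by (rule mpar_eqI)
  ultimately show "mpar M y \<in> M" "y - mpar M y \<in> mperp M"
    by simp_all
qed

lemma linear_mpar: "linear (mpar M)"
proof
  fix x y :: "'s mink" and c :: real
  have "(x - mpar M x) + (y - mpar M y) \<in> mperp M"
    by (rule subspace_add[OF subspace_mperp diff_mpar_in_mperp diff_mpar_in_mperp])
  then show "mpar M (x + y) = mpar M x + mpar M y"
    by (intro mpar_eqI subspace_add[OF subspace_plane mpar_in_plane mpar_in_plane])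
      (simp add: algebra_simps)
  have "c *\<^sub>R (x - mpar M x) \<in> mperp M"
    by (rule subspace_scale[OF subspace_mperp diff_mpar_in_mperp])
  then show "mpar M (c *\<^sub>R x) = c *\<^sub>R mpar M x"
    by (intro mpar_eqI subspace_scale[OF subspace_plane mpar_in_plane])
      (simp add: algebra_simps)
qed

lemma mpar_plane: "m \<in> M \<Longrightarrow> mpar M m = m"
  using subspace_0[OF subspace_mperp] by (intro mpar_eqI) simp_all

lemma mpar_mperp: "w \<in> mperp M \<Longrightarrow> mpar M w = 0"
  using subspace_0[OF subspace_plane] by (intro mpar_eqI) simp_all

lemma mprod_mpar_left:
  assumes "m \<in> M"
  shows "mprod (mpar M v) m = mprod v m"
proof -
  have "mprod v m = mprod (mpar M v) m + mprod (v - mpar M v) m"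
    by (simp flip: mprod_add_left)
  then show ?thesis
    using mperp_orthogonal(2)[OF assms diff_mpar_in_mperp] by simp
qed

lemma mprod_self_le_mprod_mpar: "mprod v v \<le> mprod (mpar M v) (mpar M v)"
proof -
  define w where "w = v - mpar M v"
  obtain t where "t \<in> M" "mprod t t > 0"
    using M by (auto simp: timelike_plane_def)
  moreover have "w \<in> mperp M"
    unfolding w_def by (rule diff_mpar_in_mperp)
  ultimately have "mprod w w \<le> 0"
    using spacelike_if_orth_timelike(1) mperp_orthogonal(1) by blast
  have "mprod v v = mprod (mpar M v + w) (mpar M v + w)"
    by (simp add: w_def)
  also have "\<dots> = mprod (mpar M v) (mpar M v) + mprod w w"
    using mperp_orthogonal[OF mpar_in_plane \<open>w \<in> mperp M\<close>] by (simp add: mprod_simps)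
  finally show ?thesis
    using \<open>mprod w w \<le> 0\<close> by linarith
qed

lemma mpar_causal_shift_in_Vplus:
  assumes dM: "d \<in> M" and dV: "d \<in> Vplus" and v: "norm (snd v) \<le> fst v"
    and wM: "w \<in> mperp M" and w: "- mprod w w < mprod d d / 16"
  shows "mpar M v + (1/4) *\<^sub>R d + w \<in> Vplus"
proof -
  define A where "A = mpar M v + (1/4) *\<^sub>R d"
  have "A \<in> M"
    unfolding A_def using dM subspace_plane mpar_in_plane by (simp add: subspace_add subspace_scale)
  have dv: "mprod d (mpar M v) = mprod (mpar M v) d"
    by (rule mprod_commute)
  have vd: "mprod (mpar M v) d \<ge> 0"
    using mprod_mpar_left[OF dM, of v] mprod_Vplus_causal_nonneg[OF dV v] mprod_commute[of d v]
    by simp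
  have "mprod (mpar M v) (mpar M v) \<ge> 0"
    using mprod_self_le_mprod_mpar[of v] mprod_self_nonneg_if_causal[OF v] by linarith
  moreover have "mprod A A = mprod (mpar M v) (mpar M v) + mprod (mpar M v) d / 2 + mprod d d / 16"
    unfolding A_def by (simp add: mprod_simps dv field_simps)
  ultimately have "mprod A A \<ge> mprod d d / 16"
    using vd by linarith
  then have "mprod (A + w) (A + w) > 0"
    using w mperp_orthogonal[OF \<open>A \<in> M\<close> wM] by (simp add: mprod_simps)
  moreover have "mprod d (A + w) > 0"
    using vd dv mprod_self_pos_if_Vplus[OF dV] mperp_orthogonal(1)[OF dM wM]
    by (simp add: A_def mprod_simps)
  ultimately show ?thesis
    using Vplus_if_timelike_mprod_pos[OF dV] by (simp add: A_def)
qed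

lemma mperp_part_in_mperp: "mperp_part M y \<in> mperp M"
  unfolding mperp_part_def by (rule diff_mpar_in_mperp)

lemma linear_mperp_part: "linear (mperp_part M)"
  unfolding mperp_part_def[abs_def] by (intro linear_compose_sub linear_ident linear_mpar)

lemma open_mperp_tube: "open (mperp_tube M p r)"
proof -
  have "continuous_on UNIV (mperp_part M)"
    using linear_mperp_part by (simp add: linear_continuous_on linear_conv_bounded_linear)
  then have "continuous_on UNIV (\<lambda>x. mperp_part M (x - p))"
    by (rule continuous_on_compose2) (auto intro: continuous_intros)
  then show ?thesis
    unfolding mperp_tube_def mprod_def by (intro open_Collect_less continuous_intros)
qed

lemma centre_in_mperp_tube: "r > 0 \<Longrightarrow> p \<in> mperp_tube M p r"
  by (simp add: mperp_tube_def linear_0[OF linear_mperp_part])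

lemma transl_mperp_tube:
  assumes "m \<in> M"
  shows "transl m (mperp_tube M p r) = mperp_tube M p r"
proof -
  have "mperp_part M (m + x - p) = mperp_part M (x - p)" for x
    using linear_add[OF linear_mperp_part, of m "x - p"] mpar_plane[OF assms]
    by (simp add: mperp_part_def add_diff_eq)
  then have shift: "m + x \<in> mperp_tube M p r \<longleftrightarrow> x \<in> mperp_tube M p r" for x
    by (simp add: mperp_tube_def)
  show ?thesis
    unfolding transl_def
  proof (intro equalityI subsetI)
    fix y
    assume "y \<in> (+) m ` mperp_tube M p r"
    then show "y \<in> mperp_tube M p r"
      using shift by blast
  next
    fix y
    assume "y \<in> mperp_tube M p r"
    then have "y - m \<in> mperp_tube M p r"
      using shift[of "y - m"] by simp
    then show "y \<in> (+) m ` mperp_tube M p r"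
      by (rule rev_image_eqI) simp
  qed
qed

lemma future_cylinder_in_transl_Vplus:
  assumes dM: "d \<in> M" and dV: "d \<in> Vplus"
    and x: "x \<in> setsum_mink (transl a (closure Vplus)) (mperp M)"
    and xN: "x \<in> mperp_tube M p (mprod d d / 16)"
  shows "x \<in> transl (mpar M a + mperp_part M p - (1/4) *\<^sub>R d) Vplus"
proof -
  obtain v w where xvw: "x = a + v + w" and v: "v \<in> closure Vplus" and w: "w \<in> mperp M"
    using x unfolding setsum_mink_def transl_def by blast
  have "x - (mpar M a + mperp_part M p - (1/4) *\<^sub>R d) =
      mpar M v + (1/4) *\<^sub>R d + mperp_part M (x - p)"
    using mpar_mperp[OF w]
    by (simp add: xvw mperp_part_def linear_add[OF linear_mpar] linear_diff[OF linear_mpar]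
        algebra_simps)
  also have "\<dots> \<in> Vplus"
    using closure_Vplus_subset v xN
    by (intro mpar_causal_shift_in_Vplus dM dV mperp_part_in_mperp) (auto simp: mperp_tube_def)
  finally show ?thesis
    unfolding in_transl_Vplus_iff .
qed

lemma past_cylinder_in_transl_Vminus:
  assumes dM: "d \<in> M" and dV: "d \<in> Vplus"
    and x: "x \<in> setsum_mink (transl a (closure Vminus)) (mperp M)"
    and xN: "x \<in> mperp_tube M p (mprod d d / 16)"
  shows "x \<in> transl (mpar M a + mperp_part M p + (1/4) *\<^sub>R d) Vminus"
proof -
  obtain v w where xvw: "x = a + v + w" and v: "v \<in> closure Vminus" and w: "w \<in> mperp M"
    using x unfolding setsum_mink_def transl_def by blast
  have "mpar M a + mperp_part M p + (1/4) *\<^sub>R d - x =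
      mpar M (- v) + (1/4) *\<^sub>R d + mperp_part M (p - x)"
    using mpar_mperp[OF w]
    by (simp add: xvw mperp_part_def linear_add[OF linear_mpar] linear_diff[OF linear_mpar]
        linear_neg[OF linear_mpar] algebra_simps)
  also have "\<dots> \<in> Vplus"
  proof -
    have "mperp_part M (p - x) = - mperp_part M (x - p)"
      using linear_neg[OF linear_mperp_part, of "x - p"] by simp
    then have "- mprod (mperp_part M (p - x)) (mperp_part M (p - x)) < mprod d d / 16"
      using xN by (simp add: mperp_tube_def mprod_def)
    then show ?thesis
      using closure_Vminus_subset v
      by (intro mpar_causal_shift_in_Vplus dM dV mperp_part_in_mperp) auto
  qed
  finally show ?thesis
    unfolding in_transl_Vminus_iff .
qed

lemma cylinder_inter_mperp_tube_subset:
  fixes ap am :: "'s mink"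
  defines "d \<equiv> mpar M (ap - am)"
  assumes dV: "d \<in> Vplus"
  shows "setsum_mink (transl ap (closure Vplus) \<union> transl am (closure Vminus)) (mperp M)
      \<inter> mperp_tube M p (mprod d d / 16)
    \<subseteq> transl (mpar M ap + mperp_part M p - (1/4) *\<^sub>R d) Vplus
      \<union> transl (mpar M am + mperp_part M p + (1/4) *\<^sub>R d) Vminus"
proof -
  have dM: "d \<in> M"
    unfolding d_def by (rule mpar_in_plane)
  show ?thesis
    unfolding setsum_mink_Un_left
    using future_cylinder_in_transl_Vplus[OF dM dV, of _ ap p]
      past_cylinder_in_transl_Vminus[OF dM dV, of _ am p]
    by blast
qed

end

theorem lemmaD7:
  fixes M :: "'s::finite mink set" and ap am :: "'s mink"
  assumes "timelike_plane M"
    and "mpar M (ap - am) \<in> Vplus"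
  shows "lts M (setsum_mink (transl ap (closure Vplus) \<union> transl am (closure Vminus)) (mperp M))"
  unfolding lts_def
proof
  fix p
  let ?G = "setsum_mink (transl ap (closure Vplus) \<union> transl am (closure Vminus)) (mperp M)"
  define d where "d = mpar M (ap - am)"
  define bp where "bp = mpar M ap + mperp_part M p - (1/4) *\<^sub>R d"
  define bm where "bm = mpar M am + mperp_part M p + (1/4) *\<^sub>R d"
  have dV: "d \<in> Vplus"
    using assms(2) by (simp add: d_def)
  have "bp - bm = d - ((1/4) *\<^sub>R d + (1/4) *\<^sub>R d)"
    using linear_diff[OF linear_mpar[OF assms(1)], of ap am]
    by (simp add: bp_def bm_def d_def algebra_simps)
  also have "\<dots> = (1 - 1/2) *\<^sub>R d"
    by (simp only: scaleR_diff_left scaleR_one flip: scaleR_add_left) simp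
  finally have "bp - bm \<in> Vplus"
    using Vplus_scaleR[OF dV] by simp
  moreover have "?G \<inter> mperp_tube M p (mprod d d / 16) \<subseteq> transl bp Vplus \<union> transl bm Vminus"
    unfolding d_def bp_def bm_def by (rule cylinder_inter_mperp_tube_subset[OF assms])
  moreover have "p \<in> mperp_tube M p (mprod d d / 16)"
    using centre_in_mperp_tube[OF assms(1)] mprod_self_pos_if_Vplus[OF dV] by simp
  ultimately show "\<exists>N. open N \<and> p \<in> N \<and> (\<forall>m\<in>M. transl m N = N) \<and>
      (\<exists>a b. a - b \<in> Vplus \<and> ?G \<inter> N \<subseteq> transl a Vplus \<union> transl b Vminus)"
    using open_mperp_tube[OF assms(1)] transl_mperp_tube[OF assms(1)]
    by (intro exI[of _ "mperp_tube M p (mprod d d / 16)"]) blast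
qed

end
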